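(* Every GSWNC ring is strongly $\pi$-regular, i.e., for every $a \in R$ there exists $n \in \mathbb{N}$ such that $a^n \in a^{n+1}R$.
   Context: All rings are associative with identity. An element $a$ of a ring is strongly weakly nil-clean if there exist an idempotent $e$ and a nilpotent $q$ with $eq = qe$ such that $a = q + e$ or $a = q - e$. A ring is GSWNC if every non-invertible element is strongly weakly nil-clean. *)

theory Defs
  imports Main
begin

definition invertible_elem :: "'a::ring_1 \<Rightarrow> bool" where
  "invertible_elem a \<longleftrightarrow> (\<exists>b. a * b = 1 \<and> b * a = 1)"

definition idempotent_elem :: "'a::ring_1 \<Rightarrow> bool" where
  "idempotent_elem e \<longleftrightarrow> e * e = e"

definition nilpotent_elem :: "'a::ring_1 \<Rightarrow> bool" where
  "nilpotent_elem q \<longleftrightarrow> (\<exists>n. q ^ n = 0)"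

definition strongly_weakly_nil_clean :: "'a::ring_1 \<Rightarrow> bool" where
  "strongly_weakly_nil_clean a \<longleftrightarrow>
     (\<exists>e q. idempotent_elem e \<and> nilpotent_elem q \<and> e * q = q * e \<and>
            (a = q + e \<or> a = q - e))"

definition GSWNC :: "'a::ring_1 itself \<Rightarrow> bool" where
  "GSWNC _ \<longleftrightarrow> (\<forall>a::'a. \<not> invertible_elem a \<longrightarrow> strongly_weakly_nil_clean a)"

definition strongly_pi_regular :: "'a::ring_1 itself \<Rightarrow> bool" where
  "strongly_pi_regular _ \<longleftrightarrow> (\<forall>a::'a. \<exists>n\<ge>1. \<exists>b. a ^ n = a ^ (n + 1) * b)"

end

theory Submission
  imports Defs
begin

text \<open>
  Invertible elements are trivially strongly \<pi>-regular, and \<open>a \<mapsto> -a\<close> preserves strong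
  \<pi>-regularity, so it suffices to treat \<open>a = q + e\<close> with \<open>e\<close> idempotent, \<open>q ^ n = 0\<close> and
  \<open>eq = qe\<close>. Then \<open>a ^ n (1 - e) = q ^ n (1 - e) = 0\<close>, i.e. \<open>a ^ n = a ^ n e\<close>, while
  \<open>ae = e(1 + q)\<close> with \<open>1 + q\<close> a unit; hence \<open>a ^ n = a ^ (n + 1) e (1 + q)\<inverse>\<close>.
\<close>

definition strongly_pi_regular_elem :: "'a::ring_1 \<Rightarrow> bool" where
  "strongly_pi_regular_elem a \<longleftrightarrow> (\<exists>n\<ge>1. \<exists>b. a ^ n = a ^ (n + 1) * b)"

lemma strongly_pi_regular_iff_elem:
  "strongly_pi_regular TYPE('a::ring_1) \<longleftrightarrow> (\<forall>a::'a. strongly_pi_regular_elem a)"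
  by (simp add: strongly_pi_regular_def strongly_pi_regular_elem_def)

lemma strongly_pi_regular_elem_if_invertible:
  assumes "invertible_elem a"
  shows "strongly_pi_regular_elem a"
proof -
  from assms obtain b where "a * b = 1"
    unfolding invertible_elem_def by blast
  then have "a ^ 1 = a ^ (1 + 1) * b"
    by (simp add: power2_eq_square mult.assoc)
  then show ?thesis
    unfolding strongly_pi_regular_elem_def by blast
qed

lemma strongly_pi_regular_elem_uminus:
  assumes "strongly_pi_regular_elem a"
  shows "strongly_pi_regular_elem (- a)"
proof -
  from assms obtain n b where "n \<ge> 1" and "a ^ n = a ^ (n + 1) * b"
    unfolding strongly_pi_regular_elem_def by blast
  then have "(- a) ^ n = (- a) ^ (n + 1) * (- b)"
    by (cases "even n") simp_all
  with \<open>n \<ge> 1\<close> show ?thesis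
    unfolding strongly_pi_regular_elem_def by blast
qed

lemma one_diff_mult_sum_powers:
  fixes x :: "'a::ring_1"
  shows "(1 - x) * (\<Sum>k<n. x ^ k) = 1 - x ^ n"
proof (induction n)
  case 0
  then show ?case by simp
next
  case (Suc n)
  have "(1 - x) * (\<Sum>k<Suc n. x ^ k) = (1 - x) * (\<Sum>k<n. x ^ k) + (1 - x) * x ^ n"
    by (simp add: distrib_left)
  also have "\<dots> = 1 - x ^ Suc n"
    using Suc.IH by (simp add: algebra_simps)
  finally show ?case .
qed

lemma one_plus_nilpotent_right_inverse:
  fixes q :: "'a::ring_1"
  assumes "q ^ n = 0"
  shows "(1 + q) * (\<Sum>k<n. (- q) ^ k) = 1"
  using one_diff_mult_sum_powers[of "- q" n] assms by (simp add: power_minus')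

lemma nilpotent_plus_idempotent_power_eq:
  fixes q e :: "'a::ring_1"
  assumes idem: "e * e = e" and nil: "q ^ n = 0" and comm: "e * q = q * e" and "a = q + e"
  shows "a ^ n = a ^ (n + 1) * (e * (\<Sum>k<n. (- q) ^ k))"
proof -
  have "a ^ k * (1 - e) = q ^ k * (1 - e)" for k
  proof (induction k)
    case 0
    then show ?case by simp
  next
    case (Suc k)
    have "e * q ^ k = q ^ k * e"
      using power_commuting_commutes[OF comm[symmetric]] by simp
    then have "e * q ^ k * (1 - e) = q ^ k * (e - e * e)"
      by (simp add: algebra_simps)
    then have "e * q ^ k * (1 - e) = 0"
      using idem by simp
    then have "(q + e) * (q ^ k * (1 - e)) = q ^ Suc k * (1 - e)"
      by (simp add: algebra_simps)
    with Suc.IH \<open>a = q + e\<close> show ?case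
      by (simp add: mult.assoc)
  qed
  from this[of n] nil have an_e: "a ^ n * e = a ^ n"
    by (simp add: algebra_simps)
  have "a * e = e * (1 + q)"
    using \<open>a = q + e\<close> idem comm by (simp add: algebra_simps)
  then have "a * (e * (\<Sum>k<n. (- q) ^ k)) = e"
    using one_plus_nilpotent_right_inverse[OF nil] by (metis mult.assoc mult.right_neutral)
  then have "a ^ (n + 1) * (e * (\<Sum>k<n. (- q) ^ k)) = a ^ n * e"
    by (simp only: Suc_eq_plus1[symmetric] power_Suc2 mult.assoc)
  with an_e show ?thesis
    by simp
qed

lemma strongly_pi_regular_elem_if_strongly_weakly_nil_clean:
  assumes "strongly_weakly_nil_clean a"
  shows "strongly_pi_regular_elem a"
proof -
  from assms obtain e q m where idem: "e * e = e" and "q ^ m = 0" and comm: "e * q = q * e"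
    and "a = q + e \<or> - a = - q + e"
    unfolding strongly_weakly_nil_clean_def idempotent_elem_def nilpotent_elem_def
    by (auto simp: algebra_simps)
  then have nil: "q ^ Suc m = 0" "(- q) ^ Suc m = 0"
    by (simp_all add: power_minus')
  have "strongly_pi_regular_elem x" if "x = p + e" "p ^ Suc m = 0" "e * p = p * e" for x p
    using nilpotent_plus_idempotent_power_eq[OF idem that(2,3,1)]
    unfolding strongly_pi_regular_elem_def by (intro exI[of _ "Suc m"]) auto
  with nil comm \<open>a = q + e \<or> - a = - q + e\<close> show ?thesis
    by (metis minus_minus mult_minus_left mult_minus_right strongly_pi_regular_elem_uminus)
qed

theorem corollary2p12:
  assumes "GSWNC TYPE('a::ring_1)"
  shows "strongly_pi_regular TYPE('a)"
  unfolding strongly_pi_regular_iff_elem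
proof
  fix a :: 'a
  show "strongly_pi_regular_elem a"
  proof (cases "invertible_elem a")
    case True
    then show ?thesis by (rule strongly_pi_regular_elem_if_invertible)
  next
    case False
    with assms have "strongly_weakly_nil_clean a"
      unfolding GSWNC_def by blast
    then show ?thesis by (rule strongly_pi_regular_elem_if_strongly_weakly_nil_clean)
  qed
qed

end
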